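(* Let $B,n'\ge1$ be integers, $n=2Bn'$, $s\ge0$, and let $f:\{0,1\}^{n'}\to\{\pm\tfrac12\}$ be a balanced function with $I(f)\le s$. Let $W=\mathrm{Span}\{f_z : z\in\{0,1\}^B\}\subseteq\mathbb{C}^{2^n}$ with $f_z$ as defined below. Then for every $\phi\in W$, $$2^{n-1}I(\phi)\le 2s\,|\phi^*\phi|.$$
   Context: A function $g:\{0,1\}^m\to\mathbb{C}$ is identified with the vector $\sum_x g(x)|x\rangle\in\mathbb{C}^{2^m}$. For $g:\{0,1\}^m\to\mathbb{C}$ and $i\in[m]$, $I_i(g)=\mathbb{E}_{x\in\{0,1\}^m}|g(x)-g(x\oplus e_i)|^2$ and $I(g)=\max_i I_i(g)$. Balanced means $f$ takes each value on exactly half the inputs. Partition $[n]$ into $2B$ consecutive blocks of length $n'$; for $x\in\{0,1\}^n$, $i\in[B]$, $b\in\{0,1\}$, $x_{i,b}\in\{0,1\}^{n'}$ is the restriction of $x$ to the $(2i-1+b)$-th block. For $z\in\{0,1\}^B$, $f_z(x)=f(x_{1,z_1})\cdots f(x_{B,z_B})$. *)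

theory Defs
  imports Complex_Main
begin

text \<open>Bit strings in {0,1}^m are encoded as subsets of {..<m} (the set of positions
holding a 1).
A function g on {0,1}^m is any g :: nat set => complex; only its values on
cube m matter. Indices are 0-based.\<close>

definition cube :: "nat \<Rightarrow> nat set set" where
  "cube m = Pow {..<m}"

definition flip :: "nat set \<Rightarrow> nat \<Rightarrow> nat set" where
  "flip x i = (if i \<in> x then x - {i} else insert i x)"

definition infl_i :: "nat \<Rightarrow> (nat set \<Rightarrow> complex) \<Rightarrow> nat \<Rightarrow> real" where
  "infl_i m g i = (\<Sum>x\<in>cube m. (cmod (g x - g (flip x i)))\<^sup>2) / 2 ^ m"

definition infl :: "nat \<Rightarrow> (nat set \<Rightarrow> complex) \<Rightarrow> real" where
  "infl m g = Max ((infl_i m g) ` {..<m})"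

definition balanced :: "nat \<Rightarrow> (nat set \<Rightarrow> real) \<Rightarrow> bool" where
  "balanced m f \<longleftrightarrow> (\<forall>v \<in> f ` cube m.
      2 * card {x \<in> cube m. f x = v} = card (cube m))"

text \<open>x_{i,b}: restriction of x to block number 2i+b (0-based; i < B), each block
of length n', shifted to {0,1}^{n'}.\<close>
definition restr :: "nat \<Rightarrow> nat set \<Rightarrow> nat \<Rightarrow> bool \<Rightarrow> nat set" where
  "restr n' x i b = {k. k < n' \<and> k + (2 * i + (if b then 1 else 0)) * n' \<in> x}"

definition fz :: "nat \<Rightarrow> nat \<Rightarrow> (nat set \<Rightarrow> real) \<Rightarrow> nat set \<Rightarrow> nat set \<Rightarrow> complex" where
  "fz B n' f z x = complex_of_real (\<Prod>i<B. f (restr n' x i (i \<in> z)))"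

end

theory Submission
  imports Defs
begin

text \<open>
  Split the 2Bn' bits into B blocks of 2n' bits. Then f_z is a product of one factor per block,
  the factor on block i being f read off the half selected by z_i, so inner products of such
  products factor blockwise. Since f is balanced, the two half-readers are orthogonal, each of
  squared norm K = 4^n'/4; hence the f_z are orthogonal and the squared norm of \<phi> is
  K^B \<Sum>|c_z|^2. Flipping one bit j changes only the factor of the block containing j, and kills
  it unless z selects the half containing j; the resulting differences are again orthogonal
  products, now with one factor of squared norm 2^n' \<Sum>_y |f y - f (y xor e_k)|^2
  \<le> 4^n' I(f) \<le> 4 K s. So \<Sum>_x |\<phi> x - \<phi> (x xor e_j)|^2 \<le> 4 s |\<phi>|^2 for every j.
\<close>

definition block :: "nat \<Rightarrow> nat \<Rightarrow> nat set \<Rightarrow> nat set" where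
  "block N t x = {k. k < N \<and> k + t * N \<in> x}"

definition block_prod :: "nat \<Rightarrow> nat \<Rightarrow> (nat \<Rightarrow> nat set \<Rightarrow> 'a::comm_monoid_mult) \<Rightarrow> nat set \<Rightarrow> 'a" where
  "block_prod m N g x = (\<Prod>t<m. g t (block N t x))"

lemma finite_cube [simp]: "finite (cube m)"
  by (simp add: cube_def)

lemma card_cube: "card (cube m) = 2 ^ m"
  by (simp add: cube_def card_Pow)

lemma block_in_cube: "block N t x \<in> cube N"
  by (auto simp: block_def cube_def)

lemma add_mult_eq_add_mult_iff:
  fixes k r N :: nat
  assumes "k < N" "r < N"
  shows "k + t * N = r + t' * N \<longleftrightarrow> k = r \<and> t = t'"
proof
  assume eq: "k + t * N = r + t' * N"
  have "k = r"
    using arg_cong[OF eq, of "\<lambda>a. a mod N"] assms by simp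
  moreover have "t = t'"
    using arg_cong[OF eq, of "\<lambda>a. a div N"] assms by simp
  ultimately show "k = r \<and> t = t'" ..
qed simp

lemma block_Un_shift:
  assumes "A \<subseteq> {..<m * N}" "Y \<subseteq> {..<N}"
  shows "block N t (A \<union> (\<lambda>k. k + m * N) ` Y) = (if t < m then block N t A else if t = m then Y else {})"
proof -
  have "k + t * N < m * N \<longleftrightarrow> t < m" if "k < N" for k
    using that div_less_iff_less_mult[of N "k + t * N" m] by simp
  then show ?thesis using assms by (auto simp: block_def add_mult_eq_add_mult_iff)
qed

lemma sum_cube_block_prod:
  fixes g :: "nat \<Rightarrow> nat set \<Rightarrow> 'a::comm_semiring_1"
  shows "(\<Sum>x\<in>cube (m * N). block_prod m N g x) = (\<Prod>t<m. \<Sum>y\<in>cube N. g t y)"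
proof (induction m)
  case 0
  then show ?case by (simp add: cube_def block_prod_def)
next
  case (Suc m)
  let ?join = "\<lambda>(A, Y). A \<union> (\<lambda>k. k + m * N) ` Y"
  have "(\<Prod>t<Suc m. \<Sum>y\<in>cube N. g t y)
      = (\<Sum>(A, Y)\<in>cube (m * N) \<times> cube N. block_prod m N g A * g m Y)"
    by (simp add: sum.cartesian_product[symmetric] sum_product[symmetric] Suc)
  also have "\<dots> = (\<Sum>x\<in>cube (Suc m * N). block_prod (Suc m) N g x)"
  proof (rule sum.reindex_bij_witness[where j = ?join and i = "\<lambda>x. (x \<inter> {..<m * N}, block N m x)"])
    fix x assume x: "x \<in> cube (Suc m * N)"
    have "e < m * N \<or> e - m * N \<in> block N m x \<and> e = e - m * N + m * N" if "e \<in> x" for e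
      using that x by (auto simp: cube_def block_def)
    then show "?join (x \<inter> {..<m * N}, block N m x) = x"
      by (auto simp: block_def)
  qed (auto simp: block_in_cube cube_def block_prod_def block_Un_shift, auto simp: block_def)
  finally show ?case ..
qed

lemma prod_lessThan_if:
  fixes w :: "nat \<Rightarrow> 'a::comm_semiring_1"
  shows "(\<Prod>t<m. if P t then w t else 0) = (if \<forall>t<m. P t then \<Prod>t<m. w t else 0)"
proof (cases "\<forall>t<m. P t")
  case False
  then obtain t where "t < m" "\<not> P t" by blast
  then show ?thesis by (auto intro!: prod_zero)
qed (auto intro: prod.cong)

lemma sum_cube_block_prod_mult:
  fixes g h :: "nat \<Rightarrow> nat set \<Rightarrow> 'a::comm_semiring_1"
  assumes "\<And>t. t < m \<Longrightarrow> (\<Sum>y\<in>cube N. g t y * h t y) = (if P t then w t else 0)"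
  shows "(\<Sum>x\<in>cube (m * N). block_prod m N g x * block_prod m N h x)
    = (if \<forall>t<m. P t then \<Prod>t<m. w t else 0)"
proof -
  have "(\<Sum>x\<in>cube (m * N). block_prod m N g x * block_prod m N h x)
      = (\<Sum>x\<in>cube (m * N). block_prod m N (\<lambda>t y. g t y * h t y) x)"
    by (simp add: block_prod_def prod.distrib)
  also have "\<dots> = (\<Prod>t<m. if P t then w t else 0)"
    by (simp add: sum_cube_block_prod assms)
  finally show ?thesis
    by (simp add: prod_lessThan_if)
qed

lemma sum_cube_two_blocks:
  fixes p q :: "nat set \<Rightarrow> 'a::comm_semiring_1"
  shows "(\<Sum>Y\<in>cube (2 * N). p (block N 0 Y) * q (block N 1 Y)) = sum p (cube N) * sum q (cube N)"
  using sum_cube_block_prod[of 2 N "\<lambda>t. if t = 0 then p else q"]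
  by (simp add: block_prod_def numeral_2_eq_2)

lemma sum_cube_block_pair:
  fixes h :: "nat set \<Rightarrow> 'a::comm_semiring_1"
  shows "(\<Sum>Y\<in>cube (2 * N). h (block N (of_bool a) Y) * h (block N (of_bool a') Y))
    = (if a = a' then 2 ^ N * (\<Sum>y\<in>cube N. h y * h y) else (sum h (cube N))\<^sup>2)"
  using sum_cube_two_blocks[where p = "\<lambda>y. h y * h y" and q = "\<lambda>_. 1"]
    sum_cube_two_blocks[where p = "\<lambda>_. 1" and q = "\<lambda>y. h y * h y"]
    sum_cube_two_blocks[where p = h and q = h]
  by (cases a; cases a') (simp_all add: card_cube power2_eq_square mult.commute)

lemma block_flip:
  assumes "r < N"
  shows "block N t (flip x (r + t' * N)) = (if t = t' then flip (block N t x) r else block N t x)"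
  using assms by (auto simp: block_def flip_def add_mult_eq_add_mult_iff)

lemma block_prod_diff_flip:
  fixes g :: "nat \<Rightarrow> nat set \<Rightarrow> 'a::comm_ring_1"
  assumes "i < m" "r < N"
  shows "block_prod m N g x - block_prod m N g (flip x (r + i * N))
    = block_prod m N (g(i := \<lambda>y. g i y - g i (flip y r))) x"
proof -
  have split: "block_prod m N h y = h i (block N i y) * (\<Prod>t\<in>{..<m} - {i}. h t (block N t y))"
    for h :: "nat \<Rightarrow> nat set \<Rightarrow> 'a" and y
    using assms(1) by (simp add: block_prod_def prod.remove)
  have "(\<Prod>t\<in>{..<m} - {i}. g t (block N t (flip x (r + i * N))))
      = (\<Prod>t\<in>{..<m} - {i}. g t (block N t x))"
    using assms(2) by (intro prod.cong) (auto simp: block_flip)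
  then show ?thesis
    unfolding split[of g] split[of "g(i := _)"] using block_flip[OF assms(2)]
    by (simp add: left_diff_distrib)
qed

lemma sum_cmod_sq_orthogonal_combination:
  fixes a :: "'z \<Rightarrow> 'x \<Rightarrow> real" and c :: "'z \<Rightarrow> complex"
  assumes "finite X" "finite Z"
    and orth: "\<And>z z'. z \<in> Z \<Longrightarrow> z' \<in> Z \<Longrightarrow> (\<Sum>x\<in>X. a z x * a z' x) = (if z = z' then w z else 0)"
  shows "(\<Sum>x\<in>X. (cmod (\<Sum>z\<in>Z. c z * of_real (a z x)))\<^sup>2) = (\<Sum>z\<in>Z. w z * (cmod (c z))\<^sup>2)"
proof -
  have "complex_of_real (\<Sum>x\<in>X. (cmod (\<Sum>z\<in>Z. c z * of_real (a z x)))\<^sup>2)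
      = (\<Sum>x\<in>X. (\<Sum>z\<in>Z. c z * of_real (a z x)) * cnj (\<Sum>z\<in>Z. c z * of_real (a z x)))"
    by (simp only: of_real_sum complex_norm_square)
  also have "\<dots> = (\<Sum>x\<in>X. \<Sum>z\<in>Z. \<Sum>z'\<in>Z. c z * cnj (c z') * of_real (a z x * a z' x))"
    by (simp add: sum_product mult_ac)
  also have "\<dots> = (\<Sum>z\<in>Z. \<Sum>z'\<in>Z. c z * cnj (c z') * of_real (\<Sum>x\<in>X. a z x * a z' x))"
    by (simp add: sum.swap[of _ X] sum_distrib_left)
  also have "\<dots> = (\<Sum>z\<in>Z. \<Sum>z'\<in>Z. if z = z' then c z * cnj (c z) * of_real (w z) else 0)"
    by (intro sum.cong refl) (simp add: orth)
  also have "\<dots> = (\<Sum>z\<in>Z. c z * cnj (c z) * of_real (w z))"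
    using assms(2) by simp
  also have "\<dots> = complex_of_real (\<Sum>z\<in>Z. w z * (cmod (c z))\<^sup>2)"
    by (simp only: of_real_sum of_real_mult complex_norm_square mult.commute)
  finally show ?thesis
    by (simp only: of_real_eq_iff)
qed

lemma sum_eq_0_if_balanced_half_valued:
  fixes f :: "nat set \<Rightarrow> real"
  assumes vals: "\<forall>x \<in> cube n. f x = 1/2 \<or> f x = -1/2" and "balanced n f"
  shows "sum f (cube n) = 0"
proof -
  define v where "v = f {}"
  define A where "A = {x \<in> cube n. f x = v}"
  have empty: "{} \<in> cube n"
    by (simp add: cube_def)
  then have "2 * card A = card (cube n)"
    using \<open>balanced n f\<close> by (auto simp: balanced_def A_def v_def)
  moreover have "A \<subseteq> cube n"
    by (auto simp: A_def)
  ultimately have card_eq: "card (cube n - A) = card A"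
    by (simp add: card_Diff_subset finite_subset)
  have "sum f (cube n) = sum f A + sum f (cube n - A)"
    using \<open>A \<subseteq> cube n\<close> by (simp add: sum.subset_diff)
  also have "sum f A = (\<Sum>y\<in>A. v)"
    by (rule sum.cong) (auto simp: A_def)
  also have "sum f (cube n - A) = (\<Sum>y\<in>cube n - A. - v)"
  proof (rule sum.cong)
    fix x assume "x \<in> cube n - A"
    then show "f x = - v"
      using vals[rule_format, of x] vals[rule_format, OF empty] by (auto simp: A_def v_def)
  qed simp
  finally show ?thesis
    using card_eq by simp
qed

lemma sum_sq_half_valued:
  fixes f :: "nat set \<Rightarrow> real"
  assumes "\<forall>x \<in> cube n. f x = 1/2 \<or> f x = -1/2"
  shows "(\<Sum>y\<in>cube n. f y * f y) = 2 ^ n / 4"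
proof -
  have "f y * f y = 1 / 4" if "y \<in> cube n" for y
    using assms[rule_format, OF that] by (elim disjE) (simp_all del: eq_divide_eq_numeral1)
  then have "(\<Sum>y\<in>cube n. f y * f y) = (\<Sum>y\<in>cube n. 1 / 4)"
    by (intro sum.cong) auto
  then show ?thesis
    by (simp add: card_cube)
qed

lemma infl_i_le_infl: "i < m \<Longrightarrow> infl_i m g i \<le> infl m g"
  by (auto simp: infl_def intro!: Max_ge)

lemma sum_sq_diff_flip_le_infl:
  fixes f :: "nat set \<Rightarrow> real"
  assumes "k < m"
  shows "(\<Sum>y\<in>cube m. (f y - f (flip y k))\<^sup>2) \<le> 2 ^ m * infl m (\<lambda>x. complex_of_real (f x))"
proof -
  have "(\<Sum>y\<in>cube m. (f y - f (flip y k))\<^sup>2) = 2 ^ m * infl_i m (\<lambda>x. complex_of_real (f x)) k"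
    by (simp add: infl_i_def flip: of_real_diff)
  also have "\<dots> \<le> 2 ^ m * infl m (\<lambda>x. complex_of_real (f x))"
    using infl_i_le_infl[OF assms] by simp
  finally show ?thesis .
qed

lemma infl_attained:
  assumes "m \<ge> 1"
  obtains i where "i < m" "infl m g = infl_i m g i"
proof -
  have "0 \<in> {..<m}"
    using assms by simp
  then have "infl m g \<in> infl_i m g ` {..<m}"
    unfolding infl_def by (intro Max_in) auto
  then show ?thesis
    using that by auto
qed

definition fz_factor :: "nat \<Rightarrow> (nat set \<Rightarrow> real) \<Rightarrow> nat set \<Rightarrow> nat \<Rightarrow> nat set \<Rightarrow> real" where
  "fz_factor n' f z i Y = f (block n' (of_bool (i \<in> z)) Y)"

lemma restr_eq_block: "restr n' x i b = block n' (of_bool b) (block (2 * n') i x)"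
  unfolding restr_def block_def by (cases b) (auto simp: algebra_simps)

lemma fz_eq_block_prod: "fz B n' f z x = of_real (block_prod B (2 * n') (fz_factor n' f z) x)"
  by (simp add: fz_def block_prod_def fz_factor_def restr_eq_block)

lemma same_bits_iff_eq:
  assumes "z \<in> cube B" "z' \<in> cube B"
  shows "(\<forall>t<B. (t \<in> z) = (t \<in> z')) \<longleftrightarrow> z = z'"
  using assms by (auto simp: cube_def)

lemma sum_fz_factor_mult:
  assumes "\<forall>x \<in> cube n'. f x = 1/2 \<or> f x = -1/2" "balanced n' f"
  shows "(\<Sum>Y\<in>cube (2 * n'). fz_factor n' f z i Y * fz_factor n' f z' i Y)
    = (if (i \<in> z) = (i \<in> z') then 4 ^ n' / 4 else 0)"
proof -
  have "(2::real) ^ n' * (2 ^ n' / 4) = 4 ^ n' / 4"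
    by (simp flip: power_mult_distrib)
  then show ?thesis
    unfolding fz_factor_def sum_cube_block_pair sum_sq_half_valued[OF assms(1)]
      sum_eq_0_if_balanced_half_valued[OF assms]
    by simp
qed

lemma sum_cmod_sq_fz_combination:
  assumes "\<forall>x \<in> cube n'. f x = 1/2 \<or> f x = -1/2" "balanced n' f"
  shows "(\<Sum>x\<in>cube (2 * B * n'). (cmod (\<Sum>z\<in>cube B. c z * fz B n' f z x))\<^sup>2)
    = (4 ^ n' / 4) ^ B * (\<Sum>z\<in>cube B. (cmod (c z))\<^sup>2)"
proof -
  have "(\<Sum>x\<in>cube (B * (2 * n')).
          block_prod B (2 * n') (fz_factor n' f z) x * block_prod B (2 * n') (fz_factor n' f z') x)
      = (if z = z' then (4 ^ n' / 4) ^ B else 0)" if "z \<in> cube B" "z' \<in> cube B" for z z'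
    by (subst sum_cube_block_prod_mult[where P = "\<lambda>t. (t \<in> z) = (t \<in> z')" and w = "\<lambda>_. 4 ^ n' / 4"])
      (use sum_fz_factor_mult[OF assms] same_bits_iff_eq[OF that] in auto)
  then have "(\<Sum>x\<in>cube (B * (2 * n')). (cmod (\<Sum>z\<in>cube B. c z * fz B n' f z x))\<^sup>2)
      = (\<Sum>z\<in>cube B. (4 ^ n' / 4) ^ B * (cmod (c z))\<^sup>2)"
    unfolding fz_eq_block_prod by (intro sum_cmod_sq_orthogonal_combination) auto
  moreover have "2 * B * n' = B * (2 * n')"
    by simp
  ultimately show ?thesis
    by (simp only: sum_distrib_left)
qed

lemma fz_factor_diff_flip:
  assumes "k < n'"
  shows "fz_factor n' f z i Y - fz_factor n' f z i (flip Y (k + of_bool b * n'))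
    = (if (i \<in> z) = b then f (block n' (of_bool b) Y) - f (flip (block n' (of_bool b) Y) k) else 0)"
  using block_flip[OF assms] by (auto simp: fz_factor_def)

lemma sum_diff_flip_fz_mult:
  fixes f :: "nat set \<Rightarrow> real" and b :: bool
  assumes "\<forall>x \<in> cube n'. f x = 1/2 \<or> f x = -1/2" "balanced n' f"
    and "i < B" "k < n'" "z \<in> cube B" "z' \<in> cube B"
  defines "F \<equiv> \<lambda>z. block_prod B (2 * n') (fz_factor n' f z)"
    and "j \<equiv> k + of_bool b * n' + i * (2 * n')"
  shows "(\<Sum>x\<in>cube (B * (2 * n')). (F z x - F z (flip x j)) * (F z' x - F z' (flip x j)))
    = (if z = z' \<and> (i \<in> z) = b
       then 2 ^ n' * (\<Sum>y\<in>cube n'. (f y - f (flip y k))\<^sup>2) * (4 ^ n' / 4) ^ (B - 1) else 0)"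
proof -
  define T where "T = (\<Sum>y\<in>cube n'. (f y - f (flip y k))\<^sup>2)"
  define D where "D z = (fz_factor n' f z)(i := \<lambda>Y. fz_factor n' f z i Y
    - fz_factor n' f z i (flip Y (k + of_bool b * n')))" for z
  define P where "P t = (if t = i then (i \<in> z) = b \<and> (i \<in> z') = b else (t \<in> z) = (t \<in> z'))" for t
  have "k + of_bool b * n' < 2 * n'"
    using \<open>k < n'\<close> by (cases b) auto
  from block_prod_diff_flip[OF \<open>i < B\<close> this]
  have diff: "F z x - F z (flip x j) = block_prod B (2 * n') (D z) x" for z x
    unfolding F_def D_def j_def .
  have "(\<Sum>Y\<in>cube (2 * n'). D z t Y * D z' t Y)
      = (if P t then ((\<lambda>_. 4 ^ n' / 4)(i := 2 ^ n' * T)) t else 0)" for t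
  proof (cases "t = i")
    case True
    then show ?thesis
      using sum_cube_block_pair[of "\<lambda>y. f y - f (flip y k)" n' b b]
      by (simp add: D_def P_def T_def fz_factor_diff_flip[OF \<open>k < n'\<close>] power2_eq_square)
  qed (simp add: D_def P_def sum_fz_factor_mult[OF assms(1,2)])
  then have "(\<Sum>x\<in>cube (B * (2 * n')). (F z x - F z (flip x j)) * (F z' x - F z' (flip x j)))
      = (if \<forall>t<B. P t then \<Prod>t<B. ((\<lambda>_. 4 ^ n' / 4)(i := 2 ^ n' * T)) t else 0)"
    unfolding diff by (rule sum_cube_block_prod_mult)
  also have "(\<forall>t<B. P t) \<longleftrightarrow> z = z' \<and> (i \<in> z) = b"
    using same_bits_iff_eq[OF \<open>z \<in> cube B\<close> \<open>z' \<in> cube B\<close>] \<open>i < B\<close>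
    unfolding P_def by metis
  also have "(\<Prod>t<B. ((\<lambda>_. 4 ^ n' / 4)(i := 2 ^ n' * T)) t) = 2 ^ n' * T * (4 ^ n' / 4) ^ (B - 1)"
    using \<open>i < B\<close> by (simp add: prod.remove card_Diff_singleton)
  finally show ?thesis
    unfolding T_def .
qed

lemma sum_cmod_sq_diff_flip_fz_combination_le:
  fixes f :: "nat set \<Rightarrow> real" and c :: "nat set \<Rightarrow> complex"
  assumes "\<forall>x \<in> cube n'. f x = 1/2 \<or> f x = -1/2" "balanced n' f"
    and "infl n' (\<lambda>x. complex_of_real (f x)) \<le> s" "s \<ge> 0" "j < 2 * B * n'"
  defines "\<phi> \<equiv> \<lambda>x. \<Sum>z\<in>cube B. c z * fz B n' f z x"
  shows "(\<Sum>x\<in>cube (2 * B * n'). (cmod (\<phi> x - \<phi> (flip x j)))\<^sup>2)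
    \<le> 4 * s * ((4 ^ n' / 4) ^ B * (\<Sum>z\<in>cube B. (cmod (c z))\<^sup>2))"
proof -
  define K :: real where "K = 4 ^ n' / 4"
  define F where "F z = block_prod B (2 * n') (fz_factor n' f z)" for z
  define i where "i = j div (2 * n')"
  define r where "r = j mod (2 * n')"
  define b where "b = (n' \<le> r)"
  define k where "k = (if b then r - n' else r)"
  have "n' > 0" "B > 0"
    using \<open>j < 2 * B * n'\<close> by (auto intro: gr0I)
  have "j < B * (2 * n')"
    using \<open>j < 2 * B * n'\<close> by (simp add: mult.commute mult.left_commute)
  then have "i < B"
    using \<open>n' > 0\<close> by (simp add: i_def div_less_iff_less_mult)
  have "r < 2 * n'"
    using \<open>n' > 0\<close> by (simp add: r_def)
  then have "k < n'" and j: "j = k + of_bool b * n' + i * (2 * n')"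
    by (auto simp: k_def b_def i_def r_def mod_div_mult_eq)
  define T where "T = (\<Sum>y\<in>cube n'. (f y - f (flip y k))\<^sup>2)"
  have "T \<le> 2 ^ n' * infl n' (\<lambda>x. complex_of_real (f x))"
    unfolding T_def by (rule sum_sq_diff_flip_le_infl[OF \<open>k < n'\<close>])
  also have "\<dots> \<le> 2 ^ n' * s"
    using assms(3) by (rule mult_left_mono) simp
  finally have "2 ^ n' * T \<le> 2 ^ n' * (2 ^ n' * s)"
    by (rule mult_left_mono) simp
  also have "\<dots> = 4 ^ n' * s"
    by (simp flip: power_mult_distrib)
  finally have T_le: "2 ^ n' * T \<le> 4 ^ n' * s" .
  define w where "w z = (if (i \<in> z) = b then 2 ^ n' * T * K ^ (B - 1) else 0)" for z
  have "(\<Sum>x\<in>cube (B * (2 * n')). (F z x - F z (flip x j)) * (F z' x - F z' (flip x j)))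
      = (if z = z' then w z else 0)" if "z \<in> cube B" "z' \<in> cube B" for z z'
    using sum_diff_flip_fz_mult[OF assms(1,2) \<open>i < B\<close> \<open>k < n'\<close> that, of b]
    unfolding j F_def w_def T_def K_def by auto
  then have parseval: "(\<Sum>x\<in>cube (B * (2 * n')).
        (cmod (\<Sum>z\<in>cube B. c z * of_real (F z x - F z (flip x j))))\<^sup>2)
      = (\<Sum>z\<in>cube B. w z * (cmod (c z))\<^sup>2)"
    by (intro sum_cmod_sq_orthogonal_combination) auto
  have diff: "\<phi> x - \<phi> (flip x j) = (\<Sum>z\<in>cube B. c z * of_real (F z x - F z (flip x j)))" for x
    by (simp add: \<phi>_def F_def fz_eq_block_prod sum_subtractf right_diff_distrib)
  have dims: "2 * B * n' = B * (2 * n')"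
    by simp
  have "(\<Sum>x\<in>cube (2 * B * n'). (cmod (\<phi> x - \<phi> (flip x j)))\<^sup>2)
      = (\<Sum>z\<in>cube B. w z * (cmod (c z))\<^sup>2)"
    unfolding dims diff by (rule parseval)
  also have "\<dots> \<le> (\<Sum>z\<in>cube B. 4 * s * K ^ B * (cmod (c z))\<^sup>2)"
  proof (intro sum_mono mult_right_mono)
    have "2 ^ n' * T * K ^ (B - 1) \<le> 4 ^ n' * s * K ^ (B - 1)"
      using T_le by (simp add: K_def)
    also have "\<dots> = 4 * s * K ^ B"
      using \<open>B > 0\<close> by (cases B) (simp_all add: K_def)
    finally show "w z \<le> 4 * s * K ^ B" for z
      using \<open>s \<ge> 0\<close> by (simp add: w_def K_def)
  qed simp
  also have "\<dots> = 4 * s * (K ^ B * (\<Sum>z\<in>cube B. (cmod (c z))\<^sup>2))"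
    by (simp only: sum_distrib_left[symmetric] mult.assoc)
  finally show ?thesis
    unfolding K_def .
qed

theorem lemma2:
  fixes B n' :: nat and s :: real and f :: "nat set \<Rightarrow> real"
    and c :: "nat set \<Rightarrow> complex" and \<phi> :: "nat set \<Rightarrow> complex"
  assumes "B \<ge> 1" and "n' \<ge> 1" and "s \<ge> 0"
    and "\<forall>x \<in> cube n'. f x = 1/2 \<or> f x = -1/2"
    and "balanced n' f"
    and "infl n' (\<lambda>x. complex_of_real (f x)) \<le> s"
    and "\<phi> = (\<lambda>x. \<Sum>z\<in>cube B. c z * fz B n' f z x)"
  shows "2 ^ (2 * B * n' - 1) * infl (2 * B * n') \<phi>
           \<le> 2 * s * (\<Sum>x\<in>cube (2 * B * n'). (cmod (\<phi> x))\<^sup>2)"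
proof -
  have "2 * B * n' \<ge> 1"
    using assms(1,2) by simp
  then obtain j where "j < 2 * B * n'" and infl_eq: "infl (2 * B * n') \<phi> = infl_i (2 * B * n') \<phi> j"
    by (rule infl_attained)
  have "2 ^ (2 * B * n' - 1) * infl (2 * B * n') \<phi>
      = (\<Sum>x\<in>cube (2 * B * n'). (cmod (\<phi> x - \<phi> (flip x j)))\<^sup>2) / 2"
    using \<open>2 * B * n' \<ge> 1\<close> unfolding infl_eq infl_i_def
    by (simp add: power_diff)
  also have "\<dots> \<le> 2 * s * ((4 ^ n' / 4) ^ B * (\<Sum>z\<in>cube B. (cmod (c z))\<^sup>2))"
    using sum_cmod_sq_diff_flip_fz_combination_le[OF assms(4-6,3) \<open>j < 2 * B * n'\<close>, of c]
    unfolding assms(7) by linarith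
  also have "\<dots> = 2 * s * (\<Sum>x\<in>cube (2 * B * n'). (cmod (\<phi> x))\<^sup>2)"
    using sum_cmod_sq_fz_combination[OF assms(4,5)] assms(7) by simp
  finally show ?thesis .
qed

end
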